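(* Let $\Psi$ be the interaction on the CAR algebra $\mathcal A^{CAR}(\ell^2(\mathbb Z))$ defined by $\Psi(\{n,n+2l\})=-\frac{2i}{\pi}\,\frac{2l}{(2l)^2-1}\,(a^*_na_{n+2l}-a^*_{n+2l}a_n)$ for $n\in\mathbb Z$, $l\in\mathbb Z$, $l\ge1$, and $\Psi(X)=0$ for all other finite $X\subset\mathbb Z$. Then $\sum_{X\ni0}\Psi(X)$ converges in norm and $$\Big\|\sum_{X\ni0}\Psi(X)\Big\|\le 2\sqrt{1-\frac{4}{\pi^2}}.$$
   Context: $\mathcal A^{CAR}(\ell^2(\mathbb Z))$ is the CAR algebra generated by $a_n=a(e_n)$, $a_n^*=a^*(e_n)$, $n\in\mathbb Z$, where $\{e_n\}$ is the standard basis of $\ell^2(\mathbb Z)$, satisfying $\{a_n,a_m^*\}=\delta_{nm}I$, $\{a_n,a_m\}=0$. The sum $\sum_{X\ni 0}$ runs over all finite subsets $X\subset\mathbb Z$ containing $0$. *)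

theory Defs
  imports "HOL-Analysis.Analysis"
begin

text \<open>Concrete realisation of the CAR algebra over l2(Z) in its (faithful) Fock
  representation: the fermionic Fock space is l2 of the finite subsets of Z,
  vectors are functions int set => complex vanishing on infinite sets and
  square summable; the CAR algebra norm is the operator norm.\<close>

type_synonym fvec = "int set \<Rightarrow> complex"
type_synonym fop = "fvec \<Rightarrow> fvec"

definition fock :: "fvec set" where
  "fock = {\<psi>. (\<forall>X. infinite X \<longrightarrow> \<psi> X = 0) \<and>
                 (\<lambda>X. (cmod (\<psi> X))\<^sup>2) summable_on UNIV}"

definition fnorm :: "fvec \<Rightarrow> real" where
  "fnorm \<psi> = sqrt (\<Sum>\<^sub>\<infinity>X. (cmod (\<psi> X))\<^sup>2)"

definition jw_sign :: "int \<Rightarrow> int set \<Rightarrow> complex" where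
  "jw_sign n X = (-1) ^ card {m\<in>X. m < n}"

definition ann :: "int \<Rightarrow> fop" where
  "ann n \<psi> = (\<lambda>X. if finite X \<and> n \<notin> X then jw_sign n X * \<psi> (insert n X) else 0)"

definition cre :: "int \<Rightarrow> fop" where
  "cre n \<psi> = (\<lambda>X. if finite X \<and> n \<in> X then jw_sign n (X - {n}) * \<psi> (X - {n}) else 0)"

definition bounded_op :: "fop \<Rightarrow> bool" where
  "bounded_op T \<longleftrightarrow> (\<exists>C. \<forall>\<psi>\<in>fock. T \<psi> \<in> fock \<and> fnorm (T \<psi>) \<le> C * fnorm \<psi>)"

definition opnorm :: "fop \<Rightarrow> real" where
  "opnorm T = Sup {fnorm (T \<psi>) | \<psi>. \<psi> \<in> fock \<and> fnorm \<psi> \<le> 1}"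

definition coef :: "int \<Rightarrow> complex" where
  "coef d = - (2 * \<i> / complex_of_real pi) * (of_int d / ((of_int d)\<^sup>2 - 1))"

definition Psi :: "int set \<Rightarrow> fop" where
  "Psi X \<psi> = (if \<exists>n l. l \<ge> 1 \<and> X = {n, n + 2 * l}
     then (let n = Min X; m = Max X in
           (\<lambda>Y. coef (m - n) * (cre n (ann m \<psi>) Y - cre m (ann n \<psi>) Y)))
     else (\<lambda>Y. 0))"

end

theory Submission
  imports Defs
begin

text \<open>Only the pairs \<open>{0, k}\<close> with \<open>k\<close> even contribute, and since \<open>coef\<close> is odd both
  orientations of a pair give the same term: the sum is \<open>\<Sum>_k c_k (a_0^* a_k - a_k^* a_0)\<close>
  with \<open>c_k = coef k\<close> for even \<open>k\<close>. On configurations containing the mode 0 this operator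
  acts, up to a sign, as \<open>a(c)\<close>; on those without it as \<open>a^*(c)\<close> applied to the vector
  shifted by the mode 0. The two pieces live on complementary parts of Fock space, so the CAR
  identity \<open>\<parallel>a(h) \<phi>\<parallel>^2 + \<parallel>a^*(conj h) \<phi>\<parallel>^2 = \<parallel>h\<parallel>^2 \<parallel>\<phi>\<parallel>^2\<close> bounds its norm by \<open>\<parallel>c\<parallel>_2\<close>, and
  the same bound applied to the tails of \<open>c\<close> gives norm convergence. Finally
  \<open>|c_k|^2 \<le> (4/9) (16/9) / k^2\<close> for \<open>|k| \<ge> 2\<close> and \<open>\<Sum>_{|k| \<ge> 2} 1/k^2 \<le> 2\<close>, so
  \<open>\<parallel>c\<parallel>_2^2 \<le> 128/81 < 4 (1 - 4/\<pi>^2)\<close>.\<close>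

section \<open>Jordan--Wigner signs and the CAR relations\<close>

lemma jw_sign_mult_self: "jw_sign n X * jw_sign n X = 1"
  unfolding jw_sign_def by (simp flip: power_add)

lemma cnj_jw_sign [simp]: "cnj (jw_sign n X) = jw_sign n X"
  unfolding jw_sign_def by simp

lemma norm_jw_sign [simp]: "cmod (jw_sign n X) = 1"
  unfolding jw_sign_def by (simp add: norm_power)

lemma jw_sign_insert:
  assumes "finite Z" "k \<notin> Z"
  shows "jw_sign j (insert k Z) = (if k < j then -1 else 1) * jw_sign j Z"
proof -
  have "{m\<in>insert k Z. m < j} = (if k < j then insert k {m\<in>Z. m < j} else {m\<in>Z. m < j})"
    by auto
  then show ?thesis
    using assms unfolding jw_sign_def by auto
qed

lemma jw_sign_swap:
  assumes "finite Z" "k \<notin> Z" "j \<notin> Z" "k \<noteq> j"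
  shows "jw_sign j (insert k Z) * jw_sign k (insert j Z) = - (jw_sign j Z * jw_sign k Z)"
  using assms by (auto simp: jw_sign_insert)

lemma ann_cre_mode_identity:
  fixes \<phi> :: fvec
  assumes "finite V" "k \<in> V"
  shows "(\<Sum>Z\<in>Pow V. ann k \<phi> Z * cnj (ann k \<phi> Z)) + (\<Sum>Z\<in>Pow V. cre k \<phi> Z * cnj (cre k \<phi> Z))
       = (\<Sum>Z\<in>Pow V. \<phi> Z * cnj (\<phi> Z))"
proof -
  define n where "n Y = \<phi> Y * cnj (\<phi> Y)" for Y
  have fin: "finite (Pow V)" "\<And>Z. Z \<in> Pow V \<Longrightarrow> finite Z"
    using assms finite_subset by auto
  have "(\<Sum>Z\<in>Pow V. ann k \<phi> Z * cnj (ann k \<phi> Z)) = (\<Sum>Z\<in>{Z\<in>Pow V. k \<notin> Z}. n (insert k Z))"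
    using fin by (intro sum.mono_neutral_cong_right)
      (auto simp: ann_def n_def jw_sign_mult_self mult_ac)
  also have "\<dots> = (\<Sum>Y\<in>{Y\<in>Pow V. k \<in> Y}. n Y)"
    by (rule sum.reindex_bij_witness[where i="\<lambda>Y. Y - {k}" and j="insert k"]) (use assms in auto)
  finally have ann_part: "(\<Sum>Z\<in>Pow V. ann k \<phi> Z * cnj (ann k \<phi> Z)) = (\<Sum>Y\<in>{Y\<in>Pow V. k \<in> Y}. n Y)" .
  have "(\<Sum>Z\<in>Pow V. cre k \<phi> Z * cnj (cre k \<phi> Z)) = (\<Sum>Q\<in>{Q\<in>Pow V. k \<in> Q}. n (Q - {k}))"
    using fin by (intro sum.mono_neutral_cong_right)
      (auto simp: cre_def n_def jw_sign_mult_self mult_ac)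
  also have "\<dots> = (\<Sum>Y\<in>{Y\<in>Pow V. k \<notin> Y}. n Y)"
    by (rule sum.reindex_bij_witness[where i="insert k" and j="\<lambda>Y. Y - {k}"]) (use assms in auto)
  finally have cre_part: "(\<Sum>Z\<in>Pow V. cre k \<phi> Z * cnj (cre k \<phi> Z)) = (\<Sum>Y\<in>{Y\<in>Pow V. k \<notin> Y}. n Y)" .
  have "(\<Sum>Y\<in>Pow V. n Y) = (\<Sum>Y\<in>{Y\<in>Pow V. k \<in> Y}. n Y) + (\<Sum>Y\<in>{Y\<in>Pow V. k \<notin> Y}. n Y)"
    using fin by (subst sum.union_disjoint[symmetric]) (auto intro!: sum.cong)
  then show ?thesis
    unfolding ann_part cre_part n_def by simp
qed

lemma ann_cre_distinct_modes:
  fixes \<phi> :: fvec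
  assumes fV: "finite V" and kj: "k \<in> V" "j \<in> V" "k \<noteq> j"
  shows "(\<Sum>Z\<in>Pow V. ann k \<phi> Z * cnj (ann j \<phi> Z)) = - (\<Sum>Q\<in>Pow V. cre j \<phi> Q * cnj (cre k \<phi> Q))"
proof -
  have fin: "finite (Pow V)" "\<And>Z. Z \<in> Pow V \<Longrightarrow> finite Z"
    using fV finite_subset by auto
  have "(\<Sum>Z\<in>Pow V. ann k \<phi> Z * cnj (ann j \<phi> Z))
      = (\<Sum>Z\<in>{Z\<in>Pow V. k \<notin> Z \<and> j \<notin> Z}. ann k \<phi> Z * cnj (ann j \<phi> Z))"
    using fin by (intro sum.mono_neutral_right) (auto simp: ann_def)
  also have "\<dots> = (\<Sum>Q\<in>{Q\<in>Pow V. k \<in> Q \<and> j \<in> Q}. - (cre j \<phi> Q * cnj (cre k \<phi> Q)))"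
  proof (rule sum.reindex_bij_witness[where i="\<lambda>Q. Q - {k, j}" and j="\<lambda>Z. insert k (insert j Z)"])
    fix Z assume Z: "Z \<in> {Z\<in>Pow V. k \<notin> Z \<and> j \<notin> Z}"
    then have "finite Z" using fin by auto
    moreover have "insert k (insert j Z) - {j} = insert k Z" "insert k (insert j Z) - {k} = insert j Z"
      using Z kj by auto
    ultimately show "- (cre j \<phi> (insert k (insert j Z)) * cnj (cre k \<phi> (insert k (insert j Z))))
        = ann k \<phi> Z * cnj (ann j \<phi> Z)"
      using Z kj jw_sign_swap[of Z k j] by (simp add: cre_def ann_def algebra_simps)
  qed (use kj in auto)
  also have "\<dots> = - (\<Sum>Q\<in>Pow V. cre j \<phi> Q * cnj (cre k \<phi> Q))"
    using fin by (subst sum.mono_neutral_left[of "Pow V"]) (auto simp: cre_def sum_negf)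
  finally show ?thesis .
qed

lemma car_relation_inner:
  fixes \<phi> :: fvec
  assumes "finite V" "k \<in> V" "j \<in> V"
  shows "(\<Sum>Z\<in>Pow V. ann k \<phi> Z * cnj (ann j \<phi> Z)) + (\<Sum>Z\<in>Pow V. cre j \<phi> Z * cnj (cre k \<phi> Z))
       = (if k = j then \<Sum>Z\<in>Pow V. \<phi> Z * cnj (\<phi> Z) else 0)"
  using assms ann_cre_mode_identity ann_cre_distinct_modes by auto

definition ann_sum :: "int set \<Rightarrow> (int \<Rightarrow> complex) \<Rightarrow> fop" where
  "ann_sum K h \<phi> Z = (\<Sum>k\<in>K. h k * ann k \<phi> Z)"

definition cre_sum :: "int set \<Rightarrow> (int \<Rightarrow> complex) \<Rightarrow> fop" where
  "cre_sum K g \<phi> Z = (\<Sum>k\<in>K. g k * cre k \<phi> Z)"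

lemma sum_mult_cnj_sum:
  fixes a :: "int \<Rightarrow> 'z \<Rightarrow> complex"
  shows "(\<Sum>Z\<in>A. (\<Sum>k\<in>K. c k * a k Z) * cnj (\<Sum>j\<in>K. c j * a j Z))
       = (\<Sum>k\<in>K. \<Sum>j\<in>K. c k * cnj (c j) * (\<Sum>Z\<in>A. a k Z * cnj (a j Z)))"
proof -
  have "(\<Sum>Z\<in>A. (\<Sum>k\<in>K. c k * a k Z) * cnj (\<Sum>j\<in>K. c j * a j Z))
      = (\<Sum>Z\<in>A. \<Sum>k\<in>K. \<Sum>j\<in>K. c k * cnj (c j) * (a k Z * cnj (a j Z)))"
    by (simp add: cnj_sum sum_product mult.assoc mult.left_commute)
  also have "\<dots> = (\<Sum>k\<in>K. \<Sum>j\<in>K. \<Sum>Z\<in>A. c k * cnj (c j) * (a k Z * cnj (a j Z)))"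
    by (subst sum.swap) (rule sum.cong[OF refl], rule sum.swap)
  finally show ?thesis
    by (simp add: sum_distrib_left)
qed

lemma car_norm_identity:
  fixes \<phi> :: fvec
  assumes fV: "finite V" and KV: "K \<subseteq> V"
  shows "(\<Sum>Z\<in>Pow V. (cmod (ann_sum K h \<phi> Z))\<^sup>2) + (\<Sum>Z\<in>Pow V. (cmod (cre_sum K (\<lambda>k. cnj (h k)) \<phi> Z))\<^sup>2)
       = (\<Sum>k\<in>K. (cmod (h k))\<^sup>2) * (\<Sum>Z\<in>Pow V. (cmod (\<phi> Z))\<^sup>2)"
proof -
  define N where "N = (\<Sum>Z\<in>Pow V. \<phi> Z * cnj (\<phi> Z))"
  have "(\<Sum>Z\<in>Pow V. ann_sum K h \<phi> Z * cnj (ann_sum K h \<phi> Z))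
      + (\<Sum>Z\<in>Pow V. cre_sum K (\<lambda>k. cnj (h k)) \<phi> Z * cnj (cre_sum K (\<lambda>k. cnj (h k)) \<phi> Z))
      = (\<Sum>k\<in>K. \<Sum>j\<in>K. h k * cnj (h j) *
          ((\<Sum>Z\<in>Pow V. ann k \<phi> Z * cnj (ann j \<phi> Z)) + (\<Sum>Z\<in>Pow V. cre j \<phi> Z * cnj (cre k \<phi> Z))))"
    unfolding ann_sum_def cre_sum_def sum_mult_cnj_sum
    by (subst (2) sum.swap) (simp add: distrib_left sum.distrib mult.commute)
  also have "\<dots> = (\<Sum>k\<in>K. h k * cnj (h k) * N)"
  proof (rule sum.cong[OF refl])
    fix k assume "k \<in> K"
    then have "h k * cnj (h j) * ((\<Sum>Z\<in>Pow V. ann k \<phi> Z * cnj (ann j \<phi> Z))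
        + (\<Sum>Z\<in>Pow V. cre j \<phi> Z * cnj (cre k \<phi> Z))) = (if k = j then h k * cnj (h k) * N else 0)"
      if "j \<in> K" for j
      using fV KV that by (simp add: car_relation_inner N_def subset_iff)
    then show "(\<Sum>j\<in>K. h k * cnj (h j) * ((\<Sum>Z\<in>Pow V. ann k \<phi> Z * cnj (ann j \<phi> Z))
        + (\<Sum>Z\<in>Pow V. cre j \<phi> Z * cnj (cre k \<phi> Z)))) = h k * cnj (h k) * N"
      using finite_subset[OF KV fV] \<open>k \<in> K\<close> by (simp add: sum.delta cong: sum.cong)
  qed
  finally have "complex_of_real ((\<Sum>Z\<in>Pow V. (cmod (ann_sum K h \<phi> Z))\<^sup>2)
      + (\<Sum>Z\<in>Pow V. (cmod (cre_sum K (\<lambda>k. cnj (h k)) \<phi> Z))\<^sup>2))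
      = complex_of_real ((\<Sum>k\<in>K. (cmod (h k))\<^sup>2) * (\<Sum>Z\<in>Pow V. (cmod (\<phi> Z))\<^sup>2))"
    unfolding of_real_add of_real_mult of_real_sum complex_norm_square N_def
    by (simp add: sum_distrib_right)
  then show ?thesis
    using of_real_eq_iff by blast
qed

lemma ann_sum_norm_le:
  assumes "finite V" "K \<subseteq> V"
  shows "(\<Sum>Z\<in>Pow V. (cmod (ann_sum K h \<phi> Z))\<^sup>2) \<le> (\<Sum>k\<in>K. (cmod (h k))\<^sup>2) * (\<Sum>Z\<in>Pow V. (cmod (\<phi> Z))\<^sup>2)"
  using car_norm_identity[OF assms, of h \<phi>] sum_nonneg[of "Pow V" "\<lambda>Z. (cmod (cre_sum K (\<lambda>k. cnj (h k)) \<phi> Z))\<^sup>2"]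
  by simp

lemma cre_sum_norm_le:
  assumes "finite V" "K \<subseteq> V"
  shows "(\<Sum>Z\<in>Pow V. (cmod (cre_sum K g \<phi> Z))\<^sup>2) \<le> (\<Sum>k\<in>K. (cmod (g k))\<^sup>2) * (\<Sum>Z\<in>Pow V. (cmod (\<phi> Z))\<^sup>2)"
  using car_norm_identity[OF assms, of "\<lambda>k. cnj (g k)" \<phi>] sum_nonneg[of "Pow V" "\<lambda>Z. (cmod (ann_sum K (\<lambda>k. cnj (g k)) \<phi> Z))\<^sup>2"]
  by simp

section \<open>Square-summability of the coefficients\<close>

definition inv_square :: "int \<Rightarrow> real" where
  "inv_square k = (if \<bar>k\<bar> \<ge> 2 then 1 / (real_of_int k)\<^sup>2 else 0)"

lemma inv_square_nonneg: "inv_square k \<ge> 0"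
  unfolding inv_square_def by auto

lemma sum_inv_square_interval_le:
  "(\<Sum>k\<in>{-int (Suc n)..int (Suc n)}. inv_square k) \<le> 2 - 2 / real (Suc n)"
proof (induction n)
  case 0
  have "{-int (Suc 0)..int (Suc 0)} = {-1, 0, 1}" by auto
  then show ?case by (simp add: inv_square_def)
next
  case (Suc n)
  define m where "m = Suc (Suc n)"
  have "{-int m..int m} = insert (-int m) (insert (int m) {-int (Suc n)..int (Suc n)})"
    unfolding m_def by auto
  moreover have "inv_square (-int m) = 1 / (real m)\<^sup>2" "inv_square (int m) = 1 / (real m)\<^sup>2"
    unfolding inv_square_def m_def by (simp_all add: power2_eq_square algebra_simps)
  ultimately have "(\<Sum>k\<in>{-int m..int m}. inv_square k)
      = 2 / (real m)\<^sup>2 + (\<Sum>k\<in>{-int (Suc n)..int (Suc n)}. inv_square k)"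
    unfolding m_def by simp
  moreover have "2 / (real m)\<^sup>2 \<le> 2 / (real (Suc n) * real m)"
    by (rule frac_le) (auto simp: m_def power2_eq_square)
  moreover have "2 / (real (Suc n) * real m) = 2 / real (Suc n) - 2 / real m"
    unfolding m_def by (simp add: field_simps)
  ultimately show ?case
    using Suc.IH unfolding m_def by linarith
qed

lemma sum_inv_square_le: "finite F \<Longrightarrow> sum inv_square F \<le> 2"
proof -
  assume F: "finite F"
  define n where "n = nat (\<Sum>k\<in>F. \<bar>k\<bar>)"
  have "\<bar>k\<bar> \<le> (\<Sum>k\<in>F. \<bar>k\<bar>)" if "k \<in> F" for k
    using F that by (intro member_le_sum) auto
  then have "F \<subseteq> {-int (Suc n)..int (Suc n)}"
    unfolding n_def by force
  then have "sum inv_square F \<le> (\<Sum>k\<in>{-int (Suc n)..int (Suc n)}. inv_square k)"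
    by (intro sum_mono2) (auto simp: inv_square_nonneg)
  also have "\<dots> \<le> 2"
    using sum_inv_square_interval_le[of n] divide_nonneg_nonneg[of 2 "real (Suc n)"] by linarith
  finally show ?thesis .
qed

lemma cmod_coef_square: "(cmod (coef k))\<^sup>2 = 4 / pi\<^sup>2 * ((real_of_int k)\<^sup>2 / ((real_of_int k)\<^sup>2 - 1)\<^sup>2)"
proof -
  have coef: "coef k = - (2 * \<i> / complex_of_real pi) * complex_of_real (real_of_int k / ((real_of_int k)\<^sup>2 - 1))"
    unfolding coef_def by simp
  have "cmod (2 * \<i> / complex_of_real pi) = 2 / pi"
    by (simp add: norm_divide norm_mult)
  then show ?thesis
    unfolding coef norm_mult norm_minus_cancel norm_of_real by (simp add: power_mult_distrib power_divide)
qed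

definition hop_coef :: "int \<Rightarrow> complex" where
  "hop_coef k = (if even k then coef k else 0)"

lemma hop_coef_0 [simp]: "hop_coef 0 = 0"
  unfolding hop_coef_def coef_def by simp

lemma pi_square_ge_9: "pi\<^sup>2 \<ge> 9"
  using pi_gt3 power_mono[of 3 pi 2] by simp

lemma cmod_hop_coef_square_le: "(cmod (hop_coef k))\<^sup>2 \<le> 64 / 81 * inv_square k"
proof (cases "even k \<and> k \<noteq> 0")
  case True
  define x where "x = (real_of_int k)\<^sup>2"
  have "\<bar>k\<bar> \<ge> 2" using True by (auto elim!: evenE)
  then have x: "x \<ge> 4"
    unfolding x_def using power_mono[of 2 "real_of_int \<bar>k\<bar>" 2] by simp
  have "(cmod (hop_coef k))\<^sup>2 = 4 / pi\<^sup>2 * (x / (x - 1)\<^sup>2)"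
    using True unfolding hop_coef_def x_def by (simp add: cmod_coef_square)
  also have "\<dots> \<le> 4 / 9 * (16 / 9 / x)"
  proof (rule mult_mono)
    show "4 / pi\<^sup>2 \<le> 4 / 9"
      using pi_square_ge_9 by (intro frac_le) auto
    have "(3 * x)\<^sup>2 \<le> (4 * (x - 1))\<^sup>2"
      using x by (intro power_mono) auto
    then show "x / (x - 1)\<^sup>2 \<le> 16 / 9 / x"
      using x by (simp add: field_simps power2_eq_square)
  qed (use x in auto)
  also have "\<dots> = 64 / 81 * inv_square k"
    unfolding inv_square_def x_def using \<open>\<bar>k\<bar> \<ge> 2\<close> by simp
  finally show ?thesis .
next
  case False
  then have "hop_coef k = 0" unfolding hop_coef_def coef_def by auto
  then show ?thesis by (simp add: inv_square_nonneg)
qed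

lemma sum_cmod_hop_coef_square_le:
  assumes "finite F"
  shows "(\<Sum>k\<in>F. (cmod (hop_coef k))\<^sup>2) \<le> 128 / 81"
proof -
  have "(\<Sum>k\<in>F. (cmod (hop_coef k))\<^sup>2) \<le> (\<Sum>k\<in>F. 64 / 81 * inv_square k)"
    by (intro sum_mono cmod_hop_coef_square_le)
  also have "\<dots> \<le> 64 / 81 * 2"
    unfolding sum_distrib_left[symmetric] using sum_inv_square_le[OF assms] by simp
  finally show ?thesis by simp
qed

lemma hop_coef_square_summable: "(\<lambda>k. (cmod (hop_coef k))\<^sup>2) summable_on A"
proof -
  have "(\<lambda>k. (cmod (hop_coef k))\<^sup>2) summable_on UNIV"
    by (rule nonneg_bdd_above_summable_on)
      (auto intro!: bdd_aboveI[where M="128/81"] sum_cmod_hop_coef_square_le)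
  then show ?thesis
    by (rule summable_on_subset_banach) auto
qed

lemma infsum_hop_coef_square_le: "(\<Sum>\<^sub>\<infinity>k. (cmod (hop_coef k))\<^sup>2) \<le> 4 * (1 - 4 / pi\<^sup>2)"
proof -
  have "(\<Sum>\<^sub>\<infinity>k. (cmod (hop_coef k))\<^sup>2) \<le> 128 / 81"
    by (rule infsum_le_finite_sums[OF hop_coef_square_summable sum_cmod_hop_coef_square_le])
  moreover have "16 / pi\<^sup>2 \<le> 16 / 9"
    using pi_square_ge_9 by (intro frac_le) auto
  ultimately show ?thesis
    by (simp add: algebra_simps)
qed

section \<open>The interaction as a sum of hopping terms\<close>

definition hop :: "int \<Rightarrow> fop" where
  "hop k \<psi> Y = hop_coef k * (cre 0 (ann k \<psi>) Y - cre k (ann 0 \<psi>) Y)"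

lemma hop_0 [simp]: "hop 0 \<psi> Y = 0"
  unfolding hop_def by simp

lemma hop_infinite: "infinite Y \<Longrightarrow> hop k \<psi> Y = 0"
  unfolding hop_def cre_def by simp

lemma hop_insert_0:
  assumes "finite Z" "0 \<notin> Z" "k \<noteq> 0"
  shows "hop k \<psi> (insert 0 Z) = jw_sign 0 Z * (hop_coef k * ann k \<psi> Z)"
proof -
  have "insert 0 Z - {0} = Z" using assms by auto
  then show ?thesis
    using assms by (auto simp: hop_def cre_def ann_def)
qed

lemma hop_without_0:
  assumes "finite Y" "0 \<notin> Y" "k \<noteq> 0"
  shows "hop k \<psi> Y = - (hop_coef k * cre k (\<lambda>W. jw_sign 0 W * \<psi> (insert 0 W)) Y)"
  using assms by (auto simp: hop_def cre_def ann_def mult_ac)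

lemma coef_uminus: "coef (- d) = - coef d"
  unfolding coef_def by simp

text \<open>For \<open>k < 0\<close> the pair \<open>{k, 0}\<close> carries \<open>coef (-k)\<close> with the roles of \<open>a\<^sub>0\<close> and \<open>a\<^sub>k\<close>
  exchanged; oddness of \<open>coef\<close> turns this into \<open>hop k\<close>.\<close>

lemma Psi_pair: "Psi {0, k} = hop k"
proof (intro ext)
  fix \<psi> Y
  show "Psi {0, k} \<psi> Y = hop k \<psi> Y"
  proof (cases "\<exists>n l. l \<ge> 1 \<and> {0, k} = {n, n + 2 * l}")
    case True
    then obtain n l where l: "l \<ge> 1" "{0, k} = {n, n + 2 * l}" by blast
    then have "k = 2 * l \<or> k = - 2 * l"
      by (auto simp: doubleton_eq_iff)
    then consider "k = 2 * l" | "k = - 2 * l" by blast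
    then show ?thesis
    proof cases
      case 1
      then have "Min {0, k} = 0" "Max {0, k} = k" using l(1) by auto
      then show ?thesis
        unfolding Psi_def hop_def hop_coef_def using True 1 by (simp add: Let_def)
    next
      case 2
      then have "Min {0, k} = k" "Max {0, k} = 0" "even k" using l(1) by auto
      then show ?thesis
        unfolding Psi_def hop_def hop_coef_def using True by (simp add: Let_def coef_uminus algebra_simps)
    qed
  next
    case no_pair: False
    have "hop_coef k = 0"
    proof (rule ccontr)
      assume "hop_coef k \<noteq> 0"
      then have "even k" "k \<noteq> 0"
        unfolding hop_coef_def coef_def by (auto split: if_splits)
      then obtain l where k: "k = 2 * l" "l \<noteq> 0"
        by (auto elim!: evenE)
      have "\<exists>n l. l \<ge> 1 \<and> {0, k} = {n, n + 2 * l}"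
      proof (cases "l \<ge> 1")
        case True
        then show ?thesis using k by (intro exI[of _ 0] exI[of _ l]) simp
      next
        case False
        then show ?thesis using k by (intro exI[of _ k] exI[of _ "- l"]) (auto simp: insert_commute)
      qed
      with no_pair show False by blast
    qed
    moreover have c: "(\<exists>n l. l \<ge> 1 \<and> {0, k} = {n, n + 2 * l}) = False"
      using no_pair by blast
    ultimately show ?thesis
      unfolding Psi_def hop_def c by simp
  qed
qed

lemma Psi_not_pair:
  assumes X0: "0 \<in> X" and not_pair: "\<forall>k. X \<noteq> {0, k}"
  shows "Psi X = (\<lambda>\<psi> Y. 0)"
proof -
  have "\<not> (l \<ge> 1 \<and> X = {n, n + 2 * l})" for n l :: int
  proof
    assume "l \<ge> 1 \<and> X = {n, n + 2 * l}"
    then have "X = {0, 2 * l} \<or> X = {0, n}"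
      using X0 by (auto simp: insert_commute)
    then show False
      using not_pair by blast
  qed
  then have c: "(\<exists>n l. l \<ge> 1 \<and> X = {n, n + 2 * l}) = False"
    by blast
  show ?thesis
    unfolding Psi_def c by simp
qed

lemma finite_pair_index: "finite F \<Longrightarrow> finite {k :: int. {0, k} \<in> F}"
  by (rule finite_vimageI[of F "\<lambda>k. {0, k}", unfolded vimage_def])
    (auto intro: injI simp: doubleton_eq_iff)

lemma sum_Psi_eq_sum_hop:
  assumes "finite F" "\<forall>X\<in>F. (0::int) \<in> X"
  shows "(\<Sum>X\<in>F. Psi X \<psi> Y) = (\<Sum>k\<in>{k. {0, k} \<in> F}. hop k \<psi> Y)"
proof -
  have inj: "inj_on (\<lambda>k. {0, k}) {k. {0, k} \<in> F}"
    by (auto intro: inj_onI simp: doubleton_eq_iff)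
  have "Psi X \<psi> Y = 0" if "X \<in> F - (\<lambda>k. {0, k}) ` {k. {0, k} \<in> F}" for X
  proof -
    have "\<forall>k. X \<noteq> {0, k}" using that by blast
    then show ?thesis using that assms Psi_not_pair by auto
  qed
  then have "(\<Sum>X\<in>F. Psi X \<psi> Y) = (\<Sum>X\<in>(\<lambda>k. {0, k}) ` {k. {0, k} \<in> F}. Psi X \<psi> Y)"
    using assms by (intro sum.mono_neutral_right) auto
  also have "\<dots> = (\<Sum>k\<in>{k. {0, k} \<in> F}. hop k \<psi> Y)"
    by (simp add: sum.reindex[OF inj] Psi_pair)
  finally show ?thesis .
qed

section \<open>Norm bounds on Fock space\<close>

lemma sum_Pow_insert:
  assumes "finite V" "a \<notin> V"
  shows "(\<Sum>Y\<in>Pow (insert a V). f Y) = (\<Sum>Z\<in>Pow V. f Z) + (\<Sum>Z\<in>Pow V. f (insert a Z))"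
proof -
  have "inj_on (insert a) (Pow V)"
    using assms(2) by (intro inj_onI) (metis PowD insert_absorb2 insert_ident subsetD)
  then show ?thesis
    unfolding Pow_insert using assms
    by (subst sum.union_disjoint) (auto simp: sum.reindex)
qed

text \<open>With the mode 0 occupied the sum of hopping terms is \<open>a(c)\<close> up to a sign, with it empty
  it is \<open>-a\<^sup>*(c)\<close> applied to the vector shifted by the mode 0; the two halves of
  \<open>Pow (insert 0 V)\<close> are estimated separately.\<close>

lemma hop_sum_Pow_bound:
  assumes fV: "finite V" and V0: "0 \<notin> V" and KV: "K \<subseteq> V"
  shows "(\<Sum>Y\<in>Pow (insert 0 V). (cmod (\<Sum>k\<in>K. hop k \<psi> Y))\<^sup>2)
       \<le> (\<Sum>k\<in>K. (cmod (hop_coef k))\<^sup>2) * (\<Sum>Y\<in>Pow (insert 0 V). (cmod (\<psi> Y))\<^sup>2)"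
proof -
  define C where "C = (\<Sum>k\<in>K. (cmod (hop_coef k))\<^sup>2)"
  define \<psi>0 where "\<psi>0 W = jw_sign 0 W * \<psi> (insert 0 W)" for W
  have Z: "finite Z" "0 \<notin> Z" "\<And>k. k \<in> K \<Longrightarrow> k \<noteq> 0" if "Z \<in> Pow V" for Z
    using that fV V0 KV finite_subset by auto
  have "(\<Sum>Y\<in>Pow (insert 0 V). (cmod (\<Sum>k\<in>K. hop k \<psi> Y))\<^sup>2)
      = (\<Sum>Z\<in>Pow V. (cmod (cre_sum K hop_coef \<psi>0 Z))\<^sup>2) + (\<Sum>Z\<in>Pow V. (cmod (ann_sum K hop_coef \<psi> Z))\<^sup>2)"
    unfolding sum_Pow_insert[OF fV V0] ann_sum_def cre_sum_def \<psi>0_def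
    by (intro arg_cong2[where f="(+)"] sum.cong refl)
      (simp_all add: Z hop_insert_0 hop_without_0 sum_negf norm_mult flip: sum_distrib_left cong: sum.cong)
  also have "\<dots> \<le> C * (\<Sum>Z\<in>Pow V. (cmod (\<psi>0 Z))\<^sup>2) + C * (\<Sum>Z\<in>Pow V. (cmod (\<psi> Z))\<^sup>2)"
    unfolding C_def by (intro add_mono cre_sum_norm_le ann_sum_norm_le fV KV)
  also have "\<dots> = C * (\<Sum>Y\<in>Pow (insert 0 V). (cmod (\<psi> Y))\<^sup>2)"
    unfolding sum_Pow_insert[OF fV V0] \<psi>0_def by (simp add: norm_mult algebra_simps)
  finally show ?thesis
    unfolding C_def .
qed

lemma fock_summable_on: "\<psi> \<in> fock \<Longrightarrow> (\<lambda>X. (cmod (\<psi> X))\<^sup>2) summable_on A"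
  unfolding fock_def by (auto intro: summable_on_subset_banach)

lemma fock_sum_le_infsum:
  "\<psi> \<in> fock \<Longrightarrow> finite W \<Longrightarrow> (\<Sum>Y\<in>W. (cmod (\<psi> Y))\<^sup>2) \<le> (\<Sum>\<^sub>\<infinity>X. (cmod (\<psi> X))\<^sup>2)"
  by (rule finite_sum_le_infsum) (auto intro: fock_summable_on)

lemma ann_square_summable:
  assumes "\<psi> \<in> fock" "finite Z"
  shows "(\<lambda>k. (cmod (ann k \<psi> Z))\<^sup>2) summable_on UNIV"
proof -
  have inj: "inj_on (\<lambda>k. insert k Z) (- Z)"
    by (intro inj_onI) blast
  have "(\<lambda>X. (cmod (\<psi> X))\<^sup>2) summable_on (\<lambda>k. insert k Z) ` (- Z)"
    using assms(1) by (rule fock_summable_on)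
  then have "(\<lambda>k. (cmod (\<psi> (insert k Z)))\<^sup>2) summable_on (- Z)"
    using summable_on_reindex[OF inj, of "\<lambda>X. (cmod (\<psi> X))\<^sup>2"] by (simp add: comp_def)
  then show ?thesis
    using assms(2) by (subst summable_on_cong_neutral[where T="- Z"]) (auto simp: ann_def norm_mult)
qed

lemma hop_summable:
  assumes psi: "\<psi> \<in> fock"
  shows "(\<lambda>k. hop k \<psi> Y) summable_on A"
proof -
  have "(\<lambda>k. hop k \<psi> Y) summable_on UNIV"
  proof (cases "finite Y \<and> 0 \<in> Y")
    case True
    define Z where "Z = Y - {0}"
    have Y: "Y = insert 0 Z" "finite Z" "0 \<notin> Z"
      using True unfolding Z_def by auto
    have "cmod (hop k \<psi> Y) \<le> (cmod (hop_coef k))\<^sup>2 + (cmod (ann k \<psi> Z))\<^sup>2" for k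
    proof (cases "k = 0")
      case False
      have "cmod (hop k \<psi> Y) = cmod (hop_coef k) * cmod (ann k \<psi> Z)"
        unfolding Y(1) using Y False by (simp add: hop_insert_0 norm_mult)
      then show ?thesis
        using sum_squares_bound[of "cmod (hop_coef k)" "cmod (ann k \<psi> Z)"]
          mult_nonneg_nonneg[OF norm_ge_zero norm_ge_zero, of "hop_coef k" "ann k \<psi> Z"] by linarith
    qed simp
    then have "(\<lambda>k. cmod (hop k \<psi> Y)) summable_on UNIV"
      by (intro summable_on_comparison_test[OF summable_on_add[OF hop_coef_square_summable
            ann_square_summable[OF psi Y(2)]]]) auto
    then show ?thesis
      by (simp add: summable_on_iff_abs_summable_on_complex)
  next
    case False
    have "hop k \<psi> Y = 0" if "k \<notin> Y" for k
      using False that by (cases "finite Y") (auto simp: hop_def cre_def ann_def)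
    then have "(\<lambda>k. hop k \<psi> Y) summable_on UNIV \<longleftrightarrow> (\<lambda>k. hop k \<psi> Y) summable_on Y"
      by (intro summable_on_cong_neutral) auto
    then show ?thesis
      using False by (cases "finite Y") (auto simp: hop_infinite)
  qed
  then show ?thesis
    by (rule summable_on_subset_banach) simp
qed

lemma sum_hop_finite_bound:
  assumes psi: "\<psi> \<in> fock" and fF: "finite F" and FK: "F \<subseteq> K" and fW: "finite W"
  shows "(\<Sum>Y\<in>W. (cmod (\<Sum>k\<in>F. hop k \<psi> Y))\<^sup>2)
       \<le> (\<Sum>\<^sub>\<infinity>k\<in>K. (cmod (hop_coef k))\<^sup>2) * (\<Sum>\<^sub>\<infinity>X. (cmod (\<psi> X))\<^sup>2)"
proof -
  define W' where "W' = {Y\<in>W. finite Y}"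
  define V where "V = (F \<union> \<Union> W') - {0}"
  have fV: "finite V"
    unfolding V_def W'_def using fF fW by auto
  have "(\<Sum>Y\<in>W. (cmod (\<Sum>k\<in>F. hop k \<psi> Y))\<^sup>2) = (\<Sum>Y\<in>W'. (cmod (\<Sum>k\<in>F - {0}. hop k \<psi> Y))\<^sup>2)"
    unfolding W'_def using fW fF
    by (intro sum.mono_neutral_cong_right) (auto simp: hop_infinite sum_diff1)
  also have "\<dots> \<le> (\<Sum>Y\<in>Pow (insert 0 V). (cmod (\<Sum>k\<in>F - {0}. hop k \<psi> Y))\<^sup>2)"
    using fV by (intro sum_mono2) (auto simp: V_def W'_def)
  also have "\<dots> \<le> (\<Sum>k\<in>F - {0}. (cmod (hop_coef k))\<^sup>2) * (\<Sum>Y\<in>Pow (insert 0 V). (cmod (\<psi> Y))\<^sup>2)"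
    using fV by (intro hop_sum_Pow_bound) (auto simp: V_def)
  also have "\<dots> \<le> (\<Sum>k\<in>F. (cmod (hop_coef k))\<^sup>2) * (\<Sum>\<^sub>\<infinity>X. (cmod (\<psi> X))\<^sup>2)"
    using fF fV by (intro mult_mono sum_mono2 fock_sum_le_infsum[OF psi]) (auto simp: sum_nonneg)
  also have "\<dots> \<le> (\<Sum>\<^sub>\<infinity>k\<in>K. (cmod (hop_coef k))\<^sup>2) * (\<Sum>\<^sub>\<infinity>X. (cmod (\<psi> X))\<^sup>2)"
    using fF FK by (intro mult_right_mono finite_sum_le_infsum hop_coef_square_summable infsum_nonneg) auto
  finally show ?thesis .
qed

definition hop_sum :: "int set \<Rightarrow> fop" where
  "hop_sum K \<psi> Y = (\<Sum>\<^sub>\<infinity>k\<in>K. hop k \<psi> Y)"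

lemma hop_sum_finite_bound:
  assumes psi: "\<psi> \<in> fock" and fW: "finite W"
  shows "(\<Sum>Y\<in>W. (cmod (hop_sum K \<psi> Y))\<^sup>2)
       \<le> (\<Sum>\<^sub>\<infinity>k\<in>K. (cmod (hop_coef k))\<^sup>2) * (\<Sum>\<^sub>\<infinity>X. (cmod (\<psi> X))\<^sup>2)"
proof (rule tendsto_upperbound)
  have "((\<lambda>F. \<Sum>k\<in>F. hop k \<psi> Y) \<longlongrightarrow> hop_sum K \<psi> Y) (finite_subsets_at_top K)" for Y
    using has_sum_infsum[OF hop_summable[OF psi]] unfolding has_sum_def hop_sum_def .
  then show "((\<lambda>F. \<Sum>Y\<in>W. (cmod (\<Sum>k\<in>F. hop k \<psi> Y))\<^sup>2) \<longlongrightarrow> (\<Sum>Y\<in>W. (cmod (hop_sum K \<psi> Y))\<^sup>2))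
      (finite_subsets_at_top K)"
    by (intro tendsto_intros)
  show "\<forall>\<^sub>F F in finite_subsets_at_top K. (\<Sum>Y\<in>W. (cmod (\<Sum>k\<in>F. hop k \<psi> Y))\<^sup>2)
      \<le> (\<Sum>\<^sub>\<infinity>k\<in>K. (cmod (hop_coef k))\<^sup>2) * (\<Sum>\<^sub>\<infinity>X. (cmod (\<psi> X))\<^sup>2)"
    using sum_hop_finite_bound[OF psi _ _ fW] by (intro eventually_finite_subsets_at_top_weakI)
qed simp

lemma hop_sum_bounded:
  assumes psi: "\<psi> \<in> fock"
  shows "hop_sum K \<psi> \<in> fock"
    and "fnorm (hop_sum K \<psi>) \<le> sqrt (\<Sum>\<^sub>\<infinity>k\<in>K. (cmod (hop_coef k))\<^sup>2) * fnorm \<psi>"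
proof -
  have sq: "(\<lambda>Y. (cmod (hop_sum K \<psi> Y))\<^sup>2) summable_on UNIV"
    by (rule nonneg_bdd_above_summable_on) (auto intro!: bdd_aboveI hop_sum_finite_bound[OF psi])
  then show "hop_sum K \<psi> \<in> fock"
    unfolding fock_def by (auto simp: hop_sum_def hop_infinite)
  have "(\<Sum>\<^sub>\<infinity>Y. (cmod (hop_sum K \<psi> Y))\<^sup>2)
      \<le> (\<Sum>\<^sub>\<infinity>k\<in>K. (cmod (hop_coef k))\<^sup>2) * (\<Sum>\<^sub>\<infinity>X. (cmod (\<psi> X))\<^sup>2)"
    by (rule infsum_le_finite_sums[OF sq hop_sum_finite_bound[OF psi]])
  then show "fnorm (hop_sum K \<psi>) \<le> sqrt (\<Sum>\<^sub>\<infinity>k\<in>K. (cmod (hop_coef k))\<^sup>2) * fnorm \<psi>"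
    unfolding fnorm_def by (simp flip: real_sqrt_mult)
qed

lemma opnorm_le:
  assumes "\<And>\<psi>. \<psi> \<in> fock \<Longrightarrow> fnorm (T \<psi>) \<le> C * fnorm \<psi>" and "C \<ge> 0"
  shows "opnorm T \<le> C"
  unfolding opnorm_def
proof (rule cSup_least)
  have "(\<lambda>_. 0) \<in> fock"
    unfolding fock_def by simp
  then show "{fnorm (T \<psi>) |\<psi>. \<psi> \<in> fock \<and> fnorm \<psi> \<le> 1} \<noteq> {}"
    by (auto simp: fnorm_def)
  show "x \<le> C" if x: "x \<in> {fnorm (T \<psi>) |\<psi>. \<psi> \<in> fock \<and> fnorm \<psi> \<le> 1}" for x
  proof -
    obtain \<psi> where "x = fnorm (T \<psi>)" "\<psi> \<in> fock" "fnorm \<psi> \<le> 1"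
      using x by blast
    then show ?thesis
      using assms mult_left_le[of "fnorm \<psi>" C] by fastforce
  qed
qed

lemma opnorm_hop_sum_le: "opnorm (hop_sum K) \<le> sqrt (\<Sum>\<^sub>\<infinity>k\<in>K. (cmod (hop_coef k))\<^sup>2)"
  using hop_sum_bounded(2) by (intro opnorm_le) (auto intro: infsum_nonneg)

lemma hop_coef_tail_small:
  assumes "\<epsilon> > 0"
  obtains K0 where "finite K0"
    "\<And>K. finite K \<Longrightarrow> K0 \<subseteq> K \<Longrightarrow> (\<Sum>\<^sub>\<infinity>k\<in>- K. (cmod (hop_coef k))\<^sup>2) < \<epsilon>"
proof -
  define c where "c k = (cmod (hop_coef k))\<^sup>2" for k
  have "((\<lambda>K. \<Sum>k\<in>K. c k) \<longlongrightarrow> (\<Sum>\<^sub>\<infinity>k. c k)) (finite_subsets_at_top UNIV)"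
    using has_sum_infsum[OF hop_coef_square_summable] unfolding has_sum_def c_def .
  then have "\<forall>\<^sub>F K in finite_subsets_at_top UNIV. dist (\<Sum>k\<in>K. c k) (\<Sum>\<^sub>\<infinity>k. c k) < \<epsilon>"
    using assms by (rule tendstoD)
  then obtain K0 where K0: "finite K0"
    "\<And>K. finite K \<Longrightarrow> K0 \<subseteq> K \<Longrightarrow> dist (\<Sum>k\<in>K. c k) (\<Sum>\<^sub>\<infinity>k. c k) < \<epsilon>"
    unfolding eventually_finite_subsets_at_top by auto
  have "(\<Sum>\<^sub>\<infinity>k\<in>- K. c k) < \<epsilon>" if "finite K" "K0 \<subseteq> K" for K
  proof -
    have "(\<Sum>\<^sub>\<infinity>k. c k) = (\<Sum>\<^sub>\<infinity>k\<in>K. c k) + (\<Sum>\<^sub>\<infinity>k\<in>- K. c k)"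
      using infsum_Un_disjoint[of c K "- K"] unfolding c_def
      by (simp add: hop_coef_square_summable)
    then show ?thesis
      using K0(2)[OF that] \<open>finite K\<close> by (simp add: dist_real_def)
  qed
  then show ?thesis
    using K0(1) that unfolding c_def by blast
qed

lemma opnorm_partial_sum_error:
  assumes fF: "finite F" and F0: "\<forall>X\<in>F. (0::int) \<in> X"
  shows "opnorm (\<lambda>\<psi> Y. (\<Sum>X\<in>F. Psi X \<psi> Y) - hop_sum UNIV \<psi> Y)
       \<le> sqrt (\<Sum>\<^sub>\<infinity>k\<in>- {k. {0, k} \<in> F}. (cmod (hop_coef k))\<^sup>2)"
proof (rule opnorm_le)
  define K where "K = {k. {0, k} \<in> F}"
  fix \<psi> assume psi: "\<psi> \<in> fock"
  have "hop_sum UNIV \<psi> Y = (\<Sum>k\<in>K. hop k \<psi> Y) + hop_sum (- K) \<psi> Y" for Y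
    using infsum_Un_disjoint[of "\<lambda>k. hop k \<psi> Y" K "- K"] finite_pair_index[OF fF]
    unfolding hop_sum_def K_def by (simp add: hop_summable[OF psi])
  then have "(\<lambda>Y. (\<Sum>X\<in>F. Psi X \<psi> Y) - hop_sum UNIV \<psi> Y) = (\<lambda>Y. - hop_sum (- K) \<psi> Y)"
    using sum_Psi_eq_sum_hop[OF fF F0] unfolding K_def by auto
  then show "fnorm (\<lambda>Y. (\<Sum>X\<in>F. Psi X \<psi> Y) - hop_sum UNIV \<psi> Y)
      \<le> sqrt (\<Sum>\<^sub>\<infinity>k\<in>- {k. {0, k} \<in> F}. (cmod (hop_coef k))\<^sup>2) * fnorm \<psi>"
    using hop_sum_bounded(2)[OF psi] unfolding K_def by (simp add: fnorm_def)
qed (auto intro: infsum_nonneg)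

lemma bounded_op_hop_sum: "bounded_op (hop_sum K)"
  unfolding bounded_op_def using hop_sum_bounded by blast

lemma opnorm_hop_sum_UNIV_le: "opnorm (hop_sum UNIV) \<le> 2 * sqrt (1 - 4 / pi\<^sup>2)"
proof -
  have "opnorm (hop_sum UNIV) \<le> sqrt (\<Sum>\<^sub>\<infinity>k. (cmod (hop_coef k))\<^sup>2)"
    by (rule opnorm_hop_sum_le)
  also have "\<dots> \<le> sqrt (4 * (1 - 4 / pi\<^sup>2))"
    using infsum_hop_coef_square_le by (rule real_sqrt_le_mono)
  also have "\<dots> = 2 * sqrt (1 - 4 / pi\<^sup>2)"
    by (simp only: real_sqrt_mult) simp
  finally show ?thesis .
qed

lemma Psi_partial_sums_converge:
  assumes "\<epsilon> > 0"
  shows "\<exists>F0. finite F0 \<and> F0 \<subseteq> {X. finite X \<and> (0::int) \<in> X} \<and>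
    (\<forall>F. finite F \<and> F0 \<subseteq> F \<and> F \<subseteq> {X. finite X \<and> (0::int) \<in> X} \<longrightarrow>
       opnorm (\<lambda>\<psi> Y. (\<Sum>X\<in>F. Psi X \<psi> Y) - hop_sum UNIV \<psi> Y) < \<epsilon>)"
proof -
  obtain K0 where K0: "finite K0"
    "\<And>K. finite K \<Longrightarrow> K0 \<subseteq> K \<Longrightarrow> (\<Sum>\<^sub>\<infinity>k\<in>- K. (cmod (hop_coef k))\<^sup>2) < \<epsilon>\<^sup>2"
    using hop_coef_tail_small[of "\<epsilon>\<^sup>2"] assms by auto
  have "opnorm (\<lambda>\<psi> Y. (\<Sum>X\<in>F. Psi X \<psi> Y) - hop_sum UNIV \<psi> Y) < \<epsilon>"
    if F: "finite F" "(\<lambda>k. {0, k}) ` K0 \<subseteq> F" "F \<subseteq> {X. finite X \<and> (0::int) \<in> X}" for F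
  proof -
    have "opnorm (\<lambda>\<psi> Y. (\<Sum>X\<in>F. Psi X \<psi> Y) - hop_sum UNIV \<psi> Y)
        \<le> sqrt (\<Sum>\<^sub>\<infinity>k\<in>- {k. {0, k} \<in> F}. (cmod (hop_coef k))\<^sup>2)"
      using F by (intro opnorm_partial_sum_error) auto
    also have "\<dots> < sqrt (\<epsilon>\<^sup>2)"
      using F by (intro real_sqrt_less_mono K0(2) finite_pair_index) auto
    also have "\<dots> = \<epsilon>"
      using assms by simp
    finally show ?thesis .
  qed
  moreover have "finite ((\<lambda>k. {0, k}) ` K0)" "(\<lambda>k. {0, k}) ` K0 \<subseteq> {X. finite X \<and> (0::int) \<in> X}"
    using K0(1) by auto
  ultimately show ?thesis
    by (intro exI[of _ "(\<lambda>k. {0, k}) ` K0"]) simp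
qed

theorem mainTheorem8:
  shows "\<exists>S. bounded_op S \<and>
    (\<forall>\<epsilon>>0. \<exists>F0. finite F0 \<and> F0 \<subseteq> {X. finite X \<and> (0::int) \<in> X} \<and>
       (\<forall>F. finite F \<and> F0 \<subseteq> F \<and> F \<subseteq> {X. finite X \<and> (0::int) \<in> X} \<longrightarrow>
          opnorm (\<lambda>\<psi> Y. (\<Sum>X\<in>F. Psi X \<psi> Y) - S \<psi> Y) < \<epsilon>)) \<and>
    opnorm S \<le> 2 * sqrt (1 - 4 / pi\<^sup>2)"
  by (intro exI[of _ "hop_sum UNIV"] conjI allI impI bounded_op_hop_sum Psi_partial_sums_converge
      opnorm_hop_sum_UNIV_le)

end
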